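(* For every connected undirected unweighted graph $G=(V,E)$ on $N$ vertices and every $r>1$, we have $\mathsf{FT}_{r}^{\delta=1/2}(G)\le \frac{r}{r-1}\cdot N^5$.
   Context: Mixed $\delta$-updating on a connected undirected unweighted graph $G=(V,E)$ with $N$ vertices: each vertex holds a mutant (fitness $r>0$) or wild-type (fitness $1$); $f_S(u)$ is the fitness at $u$ when $S$ is the mutant set. At each step, with probability $\delta$ a death-Birth step: choose $v$ uniformly to die, choose a neighbor $u$ of $v$ with probability proportional to $f_S(u)$, $u$ copies its type onto $v$; with probability $1-\delta$ a Birth-death step: choose $u$ with probability proportional to $f_S(u)$ among all vertices, choose a uniformly random neighbor $v$ of $u$, $u$ copies its type onto $v$. Fixation means all vertices mutant. $\mathsf{FT}_r^\delta(G,S_0)$ is the expected time (number of steps) until fixation conditioned on fixation, starting from mutant set $S_0$; $\mathsf{FT}_r^\delta(G)=\max_{S_0}\mathsf{FT}_r^\delta(G,S_0)$ over nonempty initial mutant sets $S_0\subseteq V$. *)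

theory Defs
  imports "HOL-Analysis.Analysis"
begin

definition ugraph :: "'a set \<Rightarrow> ('a \<Rightarrow> 'a \<Rightarrow> bool) \<Rightarrow> bool" where
  "ugraph V E \<longleftrightarrow> finite V \<and> V \<noteq> {} \<and>
     (\<forall>u v. E u v \<longrightarrow> u \<in> V \<and> v \<in> V) \<and>
     (\<forall>u v. E u v \<longrightarrow> E v u) \<and> (\<forall>u. \<not> E u u)"

definition connected_graph :: "'a set \<Rightarrow> ('a \<Rightarrow> 'a \<Rightarrow> bool) \<Rightarrow> bool" where
  "connected_graph V E \<longleftrightarrow> ugraph V E \<and> (\<forall>x\<in>V. \<forall>y\<in>V. E\<^sup>*\<^sup>* x y)"

text \<open>Fitness of vertex u when S is the mutant set.\<close>
definition fit :: "real \<Rightarrow> 'a set \<Rightarrow> 'a \<Rightarrow> real" where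
  "fit r S u = (if u \<in> S then r else 1)"

text \<open>Probability that in one step of mixed delta-updating, u reproduces onto neighbour v.
  death-Birth (prob. delta): v uniform among V, then u among neighbours of v proportional to fitness.
  Birth-death (prob. 1-delta): u proportional to fitness among V, then v uniform neighbour of u.\<close>
definition pair_prob :: "'a set \<Rightarrow> ('a \<Rightarrow> 'a \<Rightarrow> bool) \<Rightarrow> real \<Rightarrow> real \<Rightarrow> 'a set \<Rightarrow> 'a \<Rightarrow> 'a \<Rightarrow> real" where
  "pair_prob V E r \<delta> S u v =
     \<delta> * ((1 / real (card V)) * (fit r S u / (\<Sum>w\<in>{w\<in>V. E v w}. fit r S w)))
   + (1 - \<delta>) * ((fit r S u / (\<Sum>w\<in>V. fit r S w)) * (1 / real (card {w\<in>V. E u w})))"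

definition copy_type :: "'a set \<Rightarrow> 'a \<Rightarrow> 'a \<Rightarrow> 'a set" where
  "copy_type S u v = (if u \<in> S then insert v S else S - {v})"

definition trans_prob :: "'a set \<Rightarrow> ('a \<Rightarrow> 'a \<Rightarrow> bool) \<Rightarrow> real \<Rightarrow> real \<Rightarrow> 'a set \<Rightarrow> 'a set \<Rightarrow> real" where
  "trans_prob V E r \<delta> S S' =
     (if S = {} \<or> S = V then (if S' = S then 1 else 0)
      else (\<Sum>(u,v)\<in>{(u,v). u \<in> V \<and> v \<in> V \<and> E u v}.
              if copy_type S u v = S' then pair_prob V E r \<delta> S u v else 0))"

fun state_dist :: "'a set \<Rightarrow> ('a \<Rightarrow> 'a \<Rightarrow> bool) \<Rightarrow> real \<Rightarrow> real \<Rightarrow> 'a set \<Rightarrow> nat \<Rightarrow> 'a set \<Rightarrow> real" where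
  "state_dist V E r \<delta> S0 0 S = (if S = S0 then 1 else 0)"
| "state_dist V E r \<delta> S0 (Suc t) S' =
     (\<Sum>S\<in>Pow V. state_dist V E r \<delta> S0 t S * trans_prob V E r \<delta> S S')"

text \<open>Probability that the fixation time T (first time all vertices are mutants) equals t.\<close>
definition fix_at :: "'a set \<Rightarrow> ('a \<Rightarrow> 'a \<Rightarrow> bool) \<Rightarrow> real \<Rightarrow> real \<Rightarrow> 'a set \<Rightarrow> nat \<Rightarrow> real" where
  "fix_at V E r \<delta> S0 t =
     (case t of 0 \<Rightarrow> state_dist V E r \<delta> S0 0 V
      | Suc s \<Rightarrow> state_dist V E r \<delta> S0 (Suc s) V - state_dist V E r \<delta> S0 s V)"

text \<open>Fixation probability (V is absorbing, so this is the limit of P(state_t = V)).\<close>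
definition fix_prob :: "'a set \<Rightarrow> ('a \<Rightarrow> 'a \<Rightarrow> bool) \<Rightarrow> real \<Rightarrow> real \<Rightarrow> 'a set \<Rightarrow> ennreal" where
  "fix_prob V E r \<delta> S0 = (SUP t. ennreal (state_dist V E r \<delta> S0 t V))"

text \<open>Expected fixation time conditioned on fixation: E[T ; fixation] / P(fixation).\<close>
definition FT :: "'a set \<Rightarrow> ('a \<Rightarrow> 'a \<Rightarrow> bool) \<Rightarrow> real \<Rightarrow> real \<Rightarrow> 'a set \<Rightarrow> ennreal" where
  "FT V E r \<delta> S0 =
     (\<Sum>t. ennreal (real t * fix_at V E r \<delta> S0 t)) / fix_prob V E r \<delta> S0"

definition FT_graph :: "'a set \<Rightarrow> ('a \<Rightarrow> 'a \<Rightarrow> bool) \<Rightarrow> real \<Rightarrow> real \<Rightarrow> ennreal" where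
  "FT_graph V E r \<delta> = (SUP S0\<in>{S0. S0 \<subseteq> V \<and> S0 \<noteq> {}}. FT V E r \<delta> S0)"

end

theory Submission
  imports Defs
begin

text \<open>Across an edge from a mutant u to a wild-type v, the probability that u copies itself onto v
  next exceeds the probability that v copies itself onto u by at least \<epsilon> = (r - 1) / (r N^3) when
  death-Birth and Birth-death steps are mixed half and half. A connected graph has such an edge in
  every non-absorbing state, so until absorption the expected number of mutants grows by at least
  \<epsilon> per step. As this expectation stays below N, the expected number of steps spent in
  non-absorbing states, which bounds the expected fixation time on the event of fixation, is at
  most N / \<epsilon>. As the expectation starts at 1 or more and never decreases, the fixation
  probability is at least 1 / N. Dividing gives N^2 / \<epsilon> = r / (r - 1) N^5.\<close>

section \<open>Absorbing chains with upward drift in cardinality\<close>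

lemma divide_left_mono_ennreal:
  fixes a b :: ennreal
  assumes "ennreal c \<le> b" "0 < c"
  shows "a / b \<le> a / ennreal c"
proof -
  have "inverse b \<le> inverse (ennreal c)"
    using assms by (cases b rule: ennreal_cases) (auto simp: inverse_ennreal intro!: ennreal_leI)
  then show ?thesis
    unfolding divide_ennreal_def by (rule mult_left_mono) simp
qed

locale card_drift_chain =
  fixes V :: "'a set" and P :: "'a set \<Rightarrow> 'a set \<Rightarrow> real" and D :: "nat \<Rightarrow> 'a set \<Rightarrow> real"
    and S0 :: "'a set" and \<epsilon> :: real
  assumes finite_V: "finite V" and V_nonempty: "V \<noteq> {}" and S0_subset: "S0 \<subseteq> V"
    and dist_0: "\<And>S. D 0 S = (if S = S0 then 1 else 0)"
    and dist_Suc: "\<And>t S'. D (Suc t) S' = (\<Sum>S\<in>Pow V. D t S * P S S')"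
    and P_nonneg: "\<And>S S'. S \<subseteq> V \<Longrightarrow> 0 \<le> P S S'"
    and P_sum: "\<And>S. S \<subseteq> V \<Longrightarrow> (\<Sum>S'\<in>Pow V. P S S') = 1"
    and P_V: "\<And>S'. P V S' = (if S' = V then 1 else 0)"
    and P_empty: "\<And>S'. P {} S' = (if S' = {} then 1 else 0)"
    and card_drift: "\<And>S. S \<subseteq> V \<Longrightarrow> S \<noteq> {} \<Longrightarrow> S \<noteq> V \<Longrightarrow>
      real (card S) + \<epsilon> \<le> (\<Sum>S'\<in>Pow V. P S S' * real (card S'))"
    and drift_pos: "0 < \<epsilon>"
begin

definition transient_mass :: "nat \<Rightarrow> real" where
  "transient_mass t = (\<Sum>S\<in>Pow V - {{}, V}. D t S)"

definition expected_card :: "nat \<Rightarrow> real" where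
  "expected_card t = (\<Sum>S\<in>Pow V. D t S * real (card S))"

definition fixation_at :: "nat \<Rightarrow> real" where
  "fixation_at t = (case t of 0 \<Rightarrow> D 0 V | Suc s \<Rightarrow> D (Suc s) V - D s V)"

lemma finite_Pow_V: "finite (Pow V)"
  using finite_V by simp

lemma card_V_pos: "0 < card V"
  using finite_V V_nonempty by (simp add: card_gt_0_iff)

lemma dist_nonneg: "0 \<le> D t S"
proof (induction t arbitrary: S)
  case 0
  then show ?case by (simp add: dist_0)
next
  case (Suc t)
  then show ?case unfolding dist_Suc by (intro sum_nonneg mult_nonneg_nonneg P_nonneg) auto
qed

lemma dist_sum: "(\<Sum>S\<in>Pow V. D t S) = 1"
proof (induction t)
  case 0
  then show ?case using S0_subset finite_Pow_V by (simp add: dist_0)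
next
  case (Suc t)
  have "(\<Sum>S'\<in>Pow V. D (Suc t) S') = (\<Sum>S\<in>Pow V. \<Sum>S'\<in>Pow V. D t S * P S S')"
    unfolding dist_Suc by (rule sum.swap)
  also have "\<dots> = (\<Sum>S\<in>Pow V. D t S)"
    by (intro sum.cong) (auto simp: P_sum simp flip: sum_distrib_left)
  finally show ?case using Suc by simp
qed

lemma dist_mult_le_dist_Suc: "S \<subseteq> V \<Longrightarrow> D t S * P S S' \<le> D (Suc t) S'"
  unfolding dist_Suc using finite_Pow_V
  by (intro member_le_sum) (auto intro!: mult_nonneg_nonneg dist_nonneg P_nonneg)

lemma mono_dist_V: "mono (\<lambda>t. D t V)"
  using dist_mult_le_dist_Suc[of V _ V] by (intro mono_iff_le_Suc[THEN iffD2]) (simp add: P_V)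

lemma mono_dist_empty: "mono (\<lambda>t. D t {})"
  using dist_mult_le_dist_Suc[of "{}" _ "{}"] by (intro mono_iff_le_Suc[THEN iffD2]) (simp add: P_empty)

lemma transient_mass_eq: "transient_mass t = 1 - D t V - D t {}"
proof -
  have "V \<in> Pow V" "{} \<in> Pow V - {V}" "Pow V - {V} - {{}} = Pow V - {{}, V}"
    using V_nonempty by auto
  then have "(\<Sum>S\<in>Pow V. D t S) = D t V + (D t {} + transient_mass t)"
    unfolding transient_mass_def using finite_Pow_V
    by (simp add: sum.remove[of "Pow V" V] sum.remove[of "Pow V - {V}" "{}"])
  then show ?thesis using dist_sum[of t] by simp
qed

lemma transient_mass_nonneg: "0 \<le> transient_mass t"
  unfolding transient_mass_def by (intro sum_nonneg dist_nonneg)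

lemma expected_card_step:
  assumes "S \<subseteq> V"
  shows "real (card S) + (if S = {} \<or> S = V then 0 else \<epsilon>) \<le> (\<Sum>S'\<in>Pow V. P S S' * real (card S'))"
proof (cases "S = {} \<or> S = V")
  case True
  then have "(\<Sum>S'\<in>Pow V. P S S' * real (card S')) = (\<Sum>S'\<in>Pow V. if S' = S then real (card S) else 0)"
    by (intro sum.cong refl) (elim disjE; simp add: P_V P_empty)
  then show ?thesis using True assms finite_Pow_V by simp
next
  case False
  then show ?thesis using card_drift[OF assms] by simp
qed

lemma expected_card_Suc_ge: "expected_card t + \<epsilon> * transient_mass t \<le> expected_card (Suc t)"
proof -
  let ?gain = "\<lambda>S. if S = {} \<or> S = V then 0 else \<epsilon>"
  have "(\<Sum>S\<in>Pow V. D t S * ?gain S) = (\<Sum>S\<in>Pow V - {{}, V}. \<epsilon> * D t S)"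
    using finite_Pow_V by (intro sum.mono_neutral_cong_right) auto
  then have "expected_card t + \<epsilon> * transient_mass t = (\<Sum>S\<in>Pow V. D t S * (real (card S) + ?gain S))"
    unfolding expected_card_def transient_mass_def distrib_left sum.distrib sum_distrib_left
    by simp
  also have "\<dots> \<le> (\<Sum>S\<in>Pow V. D t S * (\<Sum>S'\<in>Pow V. P S S' * real (card S')))"
    by (intro sum_mono mult_left_mono expected_card_step dist_nonneg) auto
  also have "\<dots> = expected_card (Suc t)"
    unfolding expected_card_def dist_Suc sum_distrib_right sum_distrib_left
    by (subst sum.swap) (simp add: mult.assoc)
  finally show ?thesis .
qed

lemma expected_card_le_card: "expected_card t \<le> real (card V)"
proof -
  have "expected_card t \<le> (\<Sum>S\<in>Pow V. D t S * real (card V))"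
    unfolding expected_card_def by (intro sum_mono mult_left_mono dist_nonneg) (auto intro: card_mono finite_V)
  also have "\<dots> = real (card V)"
    by (simp add: dist_sum flip: sum_distrib_right)
  finally show ?thesis .
qed

lemma expected_card_0: "expected_card 0 = real (card S0)"
proof -
  have "expected_card 0 = (\<Sum>S\<in>Pow V. if S = S0 then real (card S0) else 0)"
    unfolding expected_card_def by (intro sum.cong) (auto simp: dist_0)
  then show ?thesis using S0_subset finite_Pow_V by simp
qed

lemma mono_expected_card: "mono expected_card"
  using expected_card_Suc_ge drift_pos transient_mass_nonneg
  by (intro mono_iff_le_Suc[THEN iffD2]) (smt (verit) mult_nonneg_nonneg)

lemma sum_transient_mass_le: "(\<Sum>t<n. transient_mass t) \<le> real (card V) / \<epsilon>"
proof -
  have "\<epsilon> * (\<Sum>t<n. transient_mass t) \<le> expected_card n - expected_card 0"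
  proof (induction n)
    case (Suc n)
    then show ?case using expected_card_Suc_ge[of n] by (simp add: algebra_simps)
  qed simp
  also have "\<dots> \<le> real (card V)"
    using expected_card_le_card[of n] expected_card_0 by simp
  finally show ?thesis
    using drift_pos by (simp add: field_simps)
qed

lemma sum_fixation_at_telescope:
  "(\<Sum>t<Suc n. real t * fixation_at t) = (\<Sum>t<n. D n V - D t V)"
  by (induction n) (auto simp: fixation_at_def algebra_simps sum_subtractf)

lemma sum_fixation_at_le: "(\<Sum>t<n. real t * fixation_at t) \<le> real (card V) / \<epsilon>"
proof (cases n)
  case 0
  then show ?thesis using drift_pos by simp
next
  case (Suc k)
  have "(\<Sum>t<k. D k V - D t V) \<le> (\<Sum>t<k. transient_mass t)"
  proof (intro sum_mono)
    fix t assume "t \<in> {..<k}"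
    then have "D t {} \<le> D k {}"
      using monoD[OF mono_dist_empty] by simp
    then show "D k V - D t V \<le> transient_mass t"
      using transient_mass_eq[of k] transient_mass_nonneg[of k] transient_mass_eq[of t] by simp
  qed
  then show ?thesis
    using Suc sum_fixation_at_telescope[of k] sum_transient_mass_le[of k] by simp
qed

lemma fixation_at_nonneg: "0 \<le> fixation_at t"
  using mono_dist_V by (cases t) (auto simp: fixation_at_def dist_nonneg mono_iff_le_Suc)

lemma fixation_time_le: "(\<Sum>t. ennreal (real t * fixation_at t)) \<le> ennreal (real (card V) / \<epsilon>)"
proof (rule suminf_le_const[OF summableI])
  fix n
  have "(\<Sum>t<n. ennreal (real t * fixation_at t)) = ennreal (\<Sum>t<n. real t * fixation_at t)"
    using fixation_at_nonneg by (intro sum_ennreal) auto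
  then show "(\<Sum>t<n. ennreal (real t * fixation_at t)) \<le> ennreal (real (card V) / \<epsilon>)"
    using sum_fixation_at_le by (simp add: ennreal_leI)
qed

lemma expected_card_le_absorbed: "expected_card t \<le> real (card V) * (D t V + transient_mass t)"
proof -
  have "expected_card t = (\<Sum>S\<in>Pow V - {{}}. D t S * real (card S))"
    unfolding expected_card_def using finite_Pow_V by (intro sum.mono_neutral_right) auto
  also have "\<dots> \<le> (\<Sum>S\<in>Pow V - {{}}. D t S * real (card V))"
    by (intro sum_mono mult_left_mono dist_nonneg) (auto intro: card_mono finite_V)
  also have "(\<Sum>S\<in>Pow V - {{}}. D t S) = 1 - D t {}"
    using dist_sum[of t] finite_Pow_V by (simp add: sum_diff1)
  then have "(\<Sum>S\<in>Pow V - {{}}. D t S * real (card V)) = real (card V) * (1 - D t {})"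
    by (simp add: mult.commute flip: sum_distrib_right)
  finally show ?thesis
    using transient_mass_eq[of t] by simp
qed

lemma transient_mass_tendsto_0: "transient_mass \<longlonglongrightarrow> 0"
  using summableI_nonneg_bounded[OF transient_mass_nonneg sum_transient_mass_le]
  by (rule summable_LIMSEQ_zero)

lemma fixation_prob_ge:
  assumes "S0 \<noteq> {}"
  shows "ennreal (1 / real (card V)) \<le> (SUP t. ennreal (D t V))"
proof (rule ennreal_le_epsilon)
  fix e :: real
  assume "0 < e"
  then obtain t where t: "transient_mass t < e"
    using eventually_happens'[OF sequentially_bot order_tendstoD(2)[OF transient_mass_tendsto_0]]
    by blast
  have "finite S0"
    using S0_subset finite_V by (rule finite_subset)
  then have "1 \<le> expected_card 0"
    using assms by (simp add: expected_card_0 Suc_le_eq card_gt_0_iff)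
  also have "\<dots> \<le> expected_card t"
    using mono_expected_card by (simp add: monoD)
  also have "\<dots> \<le> real (card V) * (D t V + transient_mass t)"
    by (rule expected_card_le_absorbed)
  finally have "1 / real (card V) \<le> D t V + transient_mass t"
    using card_V_pos by (simp add: field_simps)
  then have "1 / real (card V) \<le> D t V + e"
    using t by simp
  then have "ennreal (1 / real (card V)) \<le> ennreal (D t V) + ennreal e"
    using \<open>0 < e\<close> dist_nonneg by (simp add: ennreal_leI flip: ennreal_plus)
  also have "\<dots> \<le> (SUP t. ennreal (D t V)) + ennreal e"
    by (intro add_mono SUP_upper) auto
  finally show "ennreal (1 / real (card V)) \<le> (SUP t. ennreal (D t V)) + ennreal e" .
qed

lemma conditional_fixation_time_le:
  assumes "S0 \<noteq> {}"
  shows "(\<Sum>t. ennreal (real t * fixation_at t)) / (SUP t. ennreal (D t V))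
    \<le> ennreal (real (card V) ^ 2 / \<epsilon>)"
proof -
  have "(\<Sum>t. ennreal (real t * fixation_at t)) / (SUP t. ennreal (D t V))
      \<le> ennreal (real (card V) / \<epsilon>) / (SUP t. ennreal (D t V))"
    by (rule divide_right_mono_ennreal[OF fixation_time_le])
  also have "\<dots> \<le> ennreal (real (card V) / \<epsilon>) / ennreal (1 / real (card V))"
    using fixation_prob_ge[OF assms] card_V_pos by (intro divide_left_mono_ennreal) auto
  also have "\<dots> = ennreal (real (card V) ^ 2 / \<epsilon>)"
    using card_V_pos drift_pos by (subst divide_ennreal) (auto simp: power2_eq_square)
  finally show ?thesis .
qed

end

section \<open>Transition probabilities of mixed updating\<close>

lemma fit_pos: "0 < r \<Longrightarrow> 0 < fit r S u"
  unfolding fit_def by simp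

lemma fit_ge_1: "1 \<le> r \<Longrightarrow> 1 \<le> fit r S u"
  unfolding fit_def by simp

lemma fit_le: "1 \<le> r \<Longrightarrow> fit r S u \<le> r"
  unfolding fit_def by simp

lemma card_le_sum_fit:
  assumes "1 \<le> r"
  shows "real (card A) \<le> (\<Sum>w\<in>A. fit r S w)"
proof -
  have "(\<Sum>w\<in>A. 1) \<le> (\<Sum>w\<in>A. fit r S w)"
    using assms by (intro sum_mono fit_ge_1)
  then show ?thesis
    by simp
qed

lemma sum_fit_le:
  assumes "1 \<le> r"
  shows "(\<Sum>w\<in>A. fit r S w) \<le> r * real (card A)"
proof -
  have "(\<Sum>w\<in>A. fit r S w) \<le> (\<Sum>w\<in>A. r)"
    using assms by (intro sum_mono fit_le)
  then show ?thesis
    by (simp add: mult.commute)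
qed

lemma card_copy_type:
  assumes "finite S"
  shows "real (card (copy_type S u v)) = real (card S) + of_bool (u \<in> S \<and> v \<notin> S) - of_bool (u \<notin> S \<and> v \<in> S)"
  using card_Suc_Diff1[OF assms, of v]
  by (cases "u \<in> S"; cases "v \<in> S") (auto simp: copy_type_def insert_absorb assms)

definition arcs :: "'a set \<Rightarrow> ('a \<Rightarrow> 'a \<Rightarrow> bool) \<Rightarrow> ('a \<times> 'a) set" where
  "arcs V E = {(u, v). u \<in> V \<and> v \<in> V \<and> E u v}"

lemma pair_prob_nonneg:
  assumes "0 < r" "0 \<le> \<delta>" "\<delta> \<le> 1"
  shows "0 \<le> pair_prob V E r \<delta> S u v"
proof -
  have "0 \<le> fit r S w" for w
    using fit_pos[OF assms(1)] by (rule less_imp_le)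
  then show ?thesis
    unfolding pair_prob_def using assms
    by (intro add_nonneg_nonneg mult_nonneg_nonneg divide_nonneg_nonneg sum_nonneg) auto
qed

lemma trans_prob_nonneg:
  assumes "0 < r" "0 \<le> \<delta>" "\<delta> \<le> 1"
  shows "0 \<le> trans_prob V E r \<delta> S S'"
  unfolding trans_prob_def by (simp add: sum_nonneg case_prod_unfold pair_prob_nonneg[OF assms])

lemma copy_type_subset: "S \<subseteq> V \<Longrightarrow> v \<in> V \<Longrightarrow> copy_type S u v \<subseteq> V"
  unfolding copy_type_def by auto

lemma trans_prob_expectation:
  assumes "finite V" "S \<subseteq> V" "S \<noteq> {}" "S \<noteq> V"
  shows "(\<Sum>S'\<in>Pow V. trans_prob V E r \<delta> S S' * g S')
    = (\<Sum>(u, v)\<in>arcs V E. pair_prob V E r \<delta> S u v * g (copy_type S u v))"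
proof -
  let ?p = "\<lambda>a. pair_prob V E r \<delta> S (fst a) (snd a)"
  let ?c = "\<lambda>a. copy_type S (fst a) (snd a)"
  have "trans_prob V E r \<delta> S S' * g S' = (\<Sum>a\<in>arcs V E. if ?c a = S' then ?p a * g S' else 0)" for S'
    using assms(3,4) unfolding trans_prob_def arcs_def
    by (simp add: case_prod_unfold sum_distrib_right if_distrib[where f = "\<lambda>x. x * g S'"] cong: if_cong)
  then have "(\<Sum>S'\<in>Pow V. trans_prob V E r \<delta> S S' * g S')
      = (\<Sum>S'\<in>Pow V. \<Sum>a\<in>arcs V E. if ?c a = S' then ?p a * g S' else 0)"
    by simp
  also have "\<dots> = (\<Sum>a\<in>arcs V E. \<Sum>S'\<in>Pow V. if ?c a = S' then ?p a * g S' else 0)"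
    by (rule sum.swap)
  also have "\<dots> = (\<Sum>a\<in>arcs V E. ?p a * g (?c a))"
  proof (intro sum.cong refl)
    fix a assume "a \<in> arcs V E"
    then obtain u v where "a = (u, v)" "v \<in> V"
      by (auto simp: arcs_def)
    then have "?c a \<in> Pow V"
      using copy_type_subset[OF assms(2)] by simp
    then show "(\<Sum>S'\<in>Pow V. if ?c a = S' then ?p a * g S' else 0) = ?p a * g (?c a)"
      using assms(1) by (simp add: sum.delta')
  qed
  finally show ?thesis
    by (simp only: case_prod_unfold)
qed

section \<open>Connected graphs\<close>

lemma degree_weighted_gap:
  fixes r N F M du dv :: real
  assumes "0 < N" "N \<le> F" "F \<le> r * N" "0 < du" "du \<le> M" "0 < dv" "dv \<le> M"
  shows "(r - 1) / (F * M) \<le> (1 / dv - 1 / du) / N + (r / du - 1 / dv) / F"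
proof -
  have F_pos: "0 < F" and M_pos: "0 < M"
    using assms by linarith+
  have "(r - 1) / (F * M) = (1 / N - 1 / F) / M + (r / F - 1 / N) / M"
    using assms F_pos M_pos by (simp add: field_simps)
  also have "\<dots> \<le> (1 / N - 1 / F) / dv + (r / F - 1 / N) / du"
  proof (intro add_mono divide_left_mono)
    show "0 \<le> 1 / N - 1 / F" "0 \<le> r / F - 1 / N"
      using assms F_pos by (simp_all add: frac_le field_simps)
  qed (use assms M_pos in auto)
  also have "\<dots> = (1 / dv - 1 / du) / N + (r / du - 1 / dv) / F"
    using assms F_pos by (simp add: field_simps)
  finally show ?thesis .
qed

lemma two_mult_pred_le_cube: "0 \<le> (N :: real) \<Longrightarrow> 2 * N * (N - 1) \<le> N ^ 3"
proof -
  assume "0 \<le> N"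
  have "N ^ 3 - 2 * N * (N - 1) = N * ((N - 1)\<^sup>2 + 1)"
    by (simp add: power2_eq_square power3_eq_cube algebra_simps)
  then show ?thesis using \<open>0 \<le> N\<close> by (smt (verit) mult_nonneg_nonneg zero_le_power2)
qed

lemma mixed_edge_gap:
  fixes r N F su sv du dv :: real
  assumes "1 \<le> r" "2 \<le> N" "N \<le> F" "F \<le> r * N"
    and "1 \<le> du" "du \<le> N - 1" "du \<le> su" and "1 \<le> dv" "dv \<le> N - 1" "dv \<le> sv" "sv \<le> r * dv"
  shows "(r - 1) / (r * N ^ 3) \<le> ((r / sv - 1 / su) / N + (r / du - 1 / dv) / F) / 2"
proof -
  have "(r - 1) / (r * N ^ 3) \<le> (r - 1) / (2 * (r * N) * (N - 1))"
    using two_mult_pred_le_cube[of N] assms(1,2) by (intro divide_left_mono) auto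
  also have "\<dots> \<le> (r - 1) / (2 * F * (N - 1))"
    using assms(1-4) by (intro divide_left_mono mult_right_mono) auto
  also have "\<dots> = (r - 1) / (F * (N - 1)) / 2"
    by simp
  also have "\<dots> \<le> ((1 / dv - 1 / du) / N + (r / du - 1 / dv) / F) / 2"
    using degree_weighted_gap[of N F r du "N - 1" dv] assms by (intro divide_right_mono) auto
  also have "\<dots> \<le> ((r / sv - 1 / su) / N + (r / du - 1 / dv) / F) / 2"
  proof -
    have "1 / dv \<le> r / sv"
      using assms(8,10,11) by (simp add: field_simps)
    moreover have "1 / su \<le> 1 / du"
      using assms(5,7) by (simp add: frac_le)
    ultimately show ?thesis
      using assms(2) by (intro divide_right_mono add_right_mono diff_mono) auto
  qed
  finally show ?thesis .
qed

lemma rtranclp_crosses_boundary: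
  assumes "E\<^sup>*\<^sup>* x y" "x \<in> S" "y \<notin> S"
  shows "\<exists>u v. u \<in> S \<and> v \<notin> S \<and> E u v"
  using assms by (induction rule: rtranclp_induct) auto

locale connected_ugraph =
  fixes V :: "'a set" and E :: "'a \<Rightarrow> 'a \<Rightarrow> bool"
  assumes connected: "connected_graph V E"
begin

lemma finite_V: "finite V" and V_nonempty: "V \<noteq> {}"
  and E_in_V: "E u v \<Longrightarrow> u \<in> V \<and> v \<in> V" and E_sym: "E u v \<Longrightarrow> E v u"
  and E_irrefl: "\<not> E u u" and E_connected: "u \<in> V \<Longrightarrow> v \<in> V \<Longrightarrow> E\<^sup>*\<^sup>* u v"
  using connected unfolding connected_graph_def ugraph_def by auto

lemma finite_arcs: "finite (arcs V E)"
proof (rule finite_subset)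
  show "arcs V E \<subseteq> V \<times> V"
    unfolding arcs_def by auto
qed (simp add: finite_V)

lemma sum_arcs: "(\<Sum>(u, v)\<in>arcs V E. g u v) = (\<Sum>u\<in>V. \<Sum>v\<in>{w\<in>V. E u w}. g u v)"
proof -
  have "arcs V E = (SIGMA u:V. {w\<in>V. E u w})"
    unfolding arcs_def by auto
  then show ?thesis
    using finite_V by (simp add: sum.Sigma)
qed

lemma sum_arcs_swap: "(\<Sum>(u, v)\<in>arcs V E. g u v) = (\<Sum>(u, v)\<in>arcs V E. g v u)"
proof -
  have "prod.swap ` arcs V E = arcs V E"
    unfolding arcs_def using E_sym by force
  then show ?thesis
    using sum.reindex[of prod.swap "arcs V E" "\<lambda>(u, v). g u v"] by simp
qed

lemma neighbours_nonempty:
  assumes "1 < card V" "u \<in> V"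
  shows "{w\<in>V. E u w} \<noteq> {}"
proof -
  have "\<not> (\<forall>a\<in>V. \<forall>b\<in>V. a = b)"
    using assms(1) card_le_Suc0_iff_eq[OF finite_V] by simp
  then obtain v where "v \<in> V" "v \<noteq> u"
    using assms(2) by blast
  then have "E\<^sup>*\<^sup>* u v" "u \<noteq> v"
    using E_connected assms(2) by auto
  then obtain w where "E u w"
    by (metis converse_rtranclpE)
  then show ?thesis
    using E_in_V by auto
qed

lemma card_neighbours_less: "u \<in> V \<Longrightarrow> card {w\<in>V. E u w} < card V"
  using E_irrefl by (intro psubset_card_mono finite_V) auto

lemma one_less_card_V:
  assumes "S \<subseteq> V" "S \<noteq> {}" "S \<noteq> V"
  shows "1 < card V"
proof -
  have "0 < card S"
    using assms finite_subset[OF _ finite_V] by (simp add: card_gt_0_iff)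
  moreover have "card S < card V"
    using assms by (intro psubset_card_mono finite_V) auto
  ultimately show ?thesis
    by linarith
qed

lemma sum_pair_prob:
  assumes "0 < r" "1 < card V"
  shows "(\<Sum>(u, v)\<in>arcs V E. pair_prob V E r \<delta> S u v) = 1"
proof -
  let ?N = "real (card V)"
  let ?F = "\<Sum>w\<in>V. fit r S w"
  let ?fit_nb = "\<lambda>u. \<Sum>w\<in>{w\<in>V. E u w}. fit r S w"
  let ?deg = "\<lambda>u. real (card {w\<in>V. E u w})"
  have F_pos: "0 < ?F"
    by (rule sum_pos[OF finite_V V_nonempty fit_pos[OF assms(1)]])
  have fit_nb_nonzero: "?fit_nb u \<noteq> 0" if "u \<in> V" for u
  proof -
    have "0 < ?fit_nb u"
      using neighbours_nonempty[OF assms(2) that] finite_V fit_pos[OF assms(1)] by (intro sum_pos) auto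
    then show ?thesis
      by simp
  qed
  have deg_pos: "0 < ?deg u" if "u \<in> V" for u
    using neighbours_nonempty[OF assms(2) that] finite_V by (simp add: card_gt_0_iff)
  have "(\<Sum>(u, v)\<in>arcs V E. fit r S u / ?fit_nb v) = (\<Sum>u\<in>V. \<Sum>v\<in>{w\<in>V. E u w}. fit r S v / ?fit_nb u)"
    by (subst sum_arcs_swap) (rule sum_arcs)
  also have "\<dots> = (\<Sum>u\<in>V. 1)"
    using fit_nb_nonzero by (intro sum.cong refl) (simp flip: sum_divide_distrib)
  finally have death_birth: "(\<Sum>(u, v)\<in>arcs V E. fit r S u / ?fit_nb v) = ?N"
    by simp
  have "(\<Sum>(u, v)\<in>arcs V E. fit r S u / ?deg u) = (\<Sum>u\<in>V. \<Sum>v\<in>{w\<in>V. E u w}. fit r S u / ?deg u)"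
    by (rule sum_arcs)
  also have "\<dots> = ?F"
    using deg_pos by (intro sum.cong refl) simp
  finally have birth_death: "(\<Sum>(u, v)\<in>arcs V E. fit r S u / ?deg u) = ?F" .
  have "(\<Sum>(u, v)\<in>arcs V E. pair_prob V E r \<delta> S u v)
      = \<delta> / ?N * (\<Sum>(u, v)\<in>arcs V E. fit r S u / ?fit_nb v)
        + (1 - \<delta>) / ?F * (\<Sum>(u, v)\<in>arcs V E. fit r S u / ?deg u)"
    unfolding pair_prob_def by (simp add: case_prod_unfold sum.distrib sum_distrib_left)
  also have "\<dots> = 1"
    using death_birth birth_death assms(2) F_pos by simp
  finally show ?thesis .
qed

lemma sum_trans_prob:
  assumes "0 < r" "S \<subseteq> V"
  shows "(\<Sum>S'\<in>Pow V. trans_prob V E r \<delta> S S') = 1"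
proof (cases "S = {} \<or> S = V")
  case True
  then have "(\<Sum>S'\<in>Pow V. trans_prob V E r \<delta> S S') = (\<Sum>S'\<in>Pow V. if S' = S then 1 else 0)"
    by (intro sum.cong) (auto simp: trans_prob_def)
  then show ?thesis
    using assms(2) finite_V by simp
next
  case False
  then show ?thesis
    using trans_prob_expectation[OF finite_V assms(2), where g = "\<lambda>_. 1"]
      sum_pair_prob[OF assms(1) one_less_card_V[OF assms(2)]] by simp
qed

lemma exists_boundary_arc:
  assumes "S \<subseteq> V" "S \<noteq> {}" "S \<noteq> V"
  obtains u v where "(u, v) \<in> arcs V E" "u \<in> S" "v \<notin> S"
proof -
  obtain x y where "x \<in> S" "y \<in> V" "y \<notin> S"
    using assms by blast
  then have "E\<^sup>*\<^sup>* x y"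
    using assms(1) E_connected by blast
  then obtain u v where "u \<in> S" "v \<notin> S" "E u v"
    using rtranclp_crosses_boundary \<open>x \<in> S\<close> \<open>y \<notin> S\<close> by metis
  then show ?thesis
    using that E_in_V unfolding arcs_def by blast
qed

text \<open>Neither rule alone has this property: Birth-death favours v when deg u > r deg v, and
  death-Birth favours v when the neighbourhood of v is more than r times as fit as that of u.
  Only their average always favours u.\<close>
lemma pair_prob_boundary_gap:
  assumes "1 \<le> r" "S \<subseteq> V" "u \<in> S" "v \<in> V - S" "E u v"
  shows "(r - 1) / (r * real (card V) ^ 3)
    \<le> pair_prob V E r (1/2) S u v - pair_prob V E r (1/2) S v u"
proof -
  define N where "N = real (card V)"
  define F where "F = (\<Sum>w\<in>V. fit r S w)"
  define su where "su = (\<Sum>w\<in>{w\<in>V. E u w}. fit r S w)"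
  define sv where "sv = (\<Sum>w\<in>{w\<in>V. E v w}. fit r S w)"
  define du where "du = real (card {w\<in>V. E u w})"
  define dv where "dv = real (card {w\<in>V. E v w})"
  have "u \<in> V" "u \<noteq> v"
    using assms by auto
  have "card {u, v} \<le> card V"
    using \<open>u \<in> V\<close> assms(4) finite_V by (intro card_mono) auto
  then have "2 \<le> N"
    unfolding N_def using \<open>u \<noteq> v\<close> by simp
  have "v \<in> {w\<in>V. E u w}" "u \<in> {w\<in>V. E v w}"
    using assms E_sym \<open>u \<in> V\<close> by auto
  then have "1 \<le> du" "1 \<le> dv"
    unfolding du_def dv_def using finite_V by (auto simp: Suc_le_eq card_gt_0_iff)
  moreover have "du \<le> N - 1" "dv \<le> N - 1"
    unfolding du_def dv_def N_def
    using card_neighbours_less[of u] card_neighbours_less[of v] \<open>u \<in> V\<close> assms(4) by auto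
  moreover have "N \<le> F" "F \<le> r * N" "du \<le> su" "dv \<le> sv" "sv \<le> r * dv"
    unfolding N_def F_def du_def su_def sv_def dv_def using card_le_sum_fit sum_fit_le assms(1) by auto
  ultimately have "(r - 1) / (r * N ^ 3) \<le> ((r / sv - 1 / su) / N + (r / du - 1 / dv) / F) / 2"
    using mixed_edge_gap assms(1) \<open>2 \<le> N\<close> by blast
  moreover have "fit r S u = r" "fit r S v = 1"
    using assms unfolding fit_def by auto
  then have "pair_prob V E r (1/2) S u v - pair_prob V E r (1/2) S v u
      = ((r / sv - 1 / su) / N + (r / du - 1 / dv) / F) / 2"
    unfolding pair_prob_def N_def[symmetric] F_def[symmetric] su_def[symmetric] sv_def[symmetric]
      du_def[symmetric] dv_def[symmetric]
    by (simp add: algebra_simps diff_divide_distrib add_divide_distrib)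
  ultimately have "(r - 1) / (r * N ^ 3) \<le> pair_prob V E r (1/2) S u v - pair_prob V E r (1/2) S v u"
    by linarith
  then show ?thesis
    unfolding N_def .
qed

lemma expected_card_after_step:
  assumes "0 < r" "S \<subseteq> V" "S \<noteq> {}" "S \<noteq> V"
  shows "(\<Sum>S'\<in>Pow V. trans_prob V E r \<delta> S S' * real (card S')) = real (card S)
    + (\<Sum>(u, v)\<in>arcs V E. (pair_prob V E r \<delta> S u v - pair_prob V E r \<delta> S v u) * of_bool (u \<in> S \<and> v \<notin> S))"
proof -
  let ?p = "pair_prob V E r \<delta> S"
  have "finite S"
    using assms(2) finite_V by (rule finite_subset)
  have "(\<Sum>S'\<in>Pow V. trans_prob V E r \<delta> S S' * real (card S'))
      = (\<Sum>(u, v)\<in>arcs V E. ?p u v * real (card (copy_type S u v)))"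
    using trans_prob_expectation[OF finite_V assms(2-4)] .
  also have "\<dots> = real (card S) * (\<Sum>(u, v)\<in>arcs V E. ?p u v)
      + (\<Sum>(u, v)\<in>arcs V E. ?p u v * of_bool (u \<in> S \<and> v \<notin> S))
      - (\<Sum>(u, v)\<in>arcs V E. ?p u v * of_bool (u \<notin> S \<and> v \<in> S))"
    unfolding card_copy_type[OF \<open>finite S\<close>]
    by (simp add: case_prod_unfold algebra_simps sum.distrib sum_subtractf sum_distrib_left)
  also have "(\<Sum>(u, v)\<in>arcs V E. ?p u v * of_bool (u \<notin> S \<and> v \<in> S))
      = (\<Sum>(u, v)\<in>arcs V E. ?p v u * of_bool (u \<in> S \<and> v \<notin> S))"
    by (subst sum_arcs_swap) (simp add: conj_commute)
  finally show ?thesis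
    using sum_pair_prob[OF assms(1) one_less_card_V[OF assms(2-4)]]
    by (simp add: case_prod_unfold left_diff_distrib sum_subtractf)
qed

lemma expected_card_drift:
  assumes "1 \<le> r" "S \<subseteq> V" "S \<noteq> {}" "S \<noteq> V"
  shows "real (card S) + (r - 1) / (r * real (card V) ^ 3)
    \<le> (\<Sum>S'\<in>Pow V. trans_prob V E r (1/2) S S' * real (card S'))"
proof -
  let ?p = "pair_prob V E r (1/2) S"
  let ?\<epsilon> = "(r - 1) / (r * real (card V) ^ 3)"
  define gain where "gain u v = (?p u v - ?p v u) * of_bool (u \<in> S \<and> v \<notin> S)" for u v
  have gain_ge: "?\<epsilon> \<le> gain u v" if "(u, v) \<in> arcs V E" "u \<in> S" "v \<notin> S" for u v
    using pair_prob_boundary_gap[OF assms(1,2)] that unfolding gain_def arcs_def by auto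
  have gain_nonneg: "0 \<le> gain u v" if "(u, v) \<in> arcs V E" for u v
  proof (cases "u \<in> S \<and> v \<notin> S")
    case True
    moreover have "0 \<le> ?\<epsilon>"
      using assms(1) by simp
    ultimately show ?thesis
      using gain_ge[OF that] by linarith
  qed (auto simp: gain_def)
  obtain u v where uv: "(u, v) \<in> arcs V E" "u \<in> S" "v \<notin> S"
    using exists_boundary_arc[OF assms(2-4)] .
  have "?\<epsilon> \<le> (\<Sum>(u, v)\<in>arcs V E. gain u v)"
    using gain_ge[OF uv] member_le_sum[OF uv(1), of "\<lambda>(u, v). gain u v"] gain_nonneg finite_arcs
    by fastforce
  then show ?thesis
    using expected_card_after_step[OF _ assms(2-4), of r "1/2"] assms(1) unfolding gain_def by simp
qed

lemma card_drift_chain_half: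
  assumes "1 < r" "S0 \<subseteq> V"
  shows "card_drift_chain V (trans_prob V E r (1/2)) (state_dist V E r (1/2) S0) S0
    ((r - 1) / (r * real (card V) ^ 3))"
proof
  show "0 \<le> trans_prob V E r (1/2) S S'" for S S'
    using assms(1) by (intro trans_prob_nonneg) auto
  show "(\<Sum>S'\<in>Pow V. trans_prob V E r (1/2) S S') = 1" if "S \<subseteq> V" for S
    using assms(1) that by (intro sum_trans_prob) auto
  show "real (card S) + (r - 1) / (r * real (card V) ^ 3)
      \<le> (\<Sum>S'\<in>Pow V. trans_prob V E r (1/2) S S' * real (card S'))"
    if "S \<subseteq> V" "S \<noteq> {}" "S \<noteq> V" for S
    using assms(1) that by (intro expected_card_drift) auto
  show "0 < (r - 1) / (r * real (card V) ^ 3)"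
    using assms(1) finite_V V_nonempty by (simp add: card_gt_0_iff)
qed (use assms finite_V V_nonempty in \<open>auto simp: trans_prob_def\<close>)

end

theorem mainTheorem3:
  fixes V :: "'a set" and E :: "'a \<Rightarrow> 'a \<Rightarrow> bool" and r :: real
  assumes "connected_graph V E" and "r > 1"
  shows "FT_graph V E r (1/2) \<le> ennreal (r / (r - 1) * real (card V) ^ 5)"
proof -
  interpret G: connected_ugraph V E
    by (rule connected_ugraph.intro) (fact assms(1))
  let ?N = "real (card V)"
  let ?\<epsilon> = "(r - 1) / (r * ?N ^ 3)"
  have bound_eq: "?N ^ 2 / ?\<epsilon> = r / (r - 1) * ?N ^ 5"
    using assms(2) G.finite_V G.V_nonempty by (simp add: field_simps card_gt_0_iff)
  have "FT V E r (1/2) S0 \<le> ennreal (r / (r - 1) * ?N ^ 5)" if "S0 \<subseteq> V" "S0 \<noteq> {}" for S0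
  proof -
    interpret card_drift_chain V "trans_prob V E r (1/2)" "state_dist V E r (1/2) S0" S0 ?\<epsilon>
      using G.card_drift_chain_half[OF assms(2) that(1)] .
    show ?thesis
      using conditional_fixation_time_le[OF that(2)]
      unfolding FT_def fix_prob_def fix_at_def fixation_at_def bound_eq .
  qed
  then show ?thesis
    unfolding FT_graph_def by (intro SUP_least) auto
qed

end
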